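(* Let $n\ge1$, $s\in(0,1)$, $p\in(1,\infty)$, $q$ with $p-1<q\le\max\{\frac{p+1}{2},\frac{2p-1}{2}\}$, and let $\psi\in C^\infty_c(B_{3/4})$ with $\psi\equiv1$ on $B_{5/8}$. Then for every $u:\mathbb{R}^n\to\mathbb{R}$ with $[u]_{M^{p,0}(B_1)}<\infty$, $$[(u-(u)_{B_1})\psi]_{BMO(\mathbb{R}^n)}\le c\left([u]_{BMO(B_1)}+[u]_{M^{p,0}(B_1)}\right)$$ with $c$ depending only on $n,s,p$ and $\psi$.
   Context: $[f]_{BMO(U)}=\sup_{B_r(z)\subset U}\fint_{B_r(z)}|f-(f)_{B_r(z)}|$. $d_su(x,y)=\frac{u(x)-u(y)}{|x-y|^s}$; $\mathrm{Tail}_q(v;B_R(x_0))=\left(R^{sp}\int_{\mathbb{R}^n\setminus B_R(x_0)}\frac{|v(y)|^q}{|y-x_0|^{n+sp}}dy\right)^{1/q}$; $\mathcal{E}(u;B_R(x_0))=R^{sp}\frac{1}{|B_R|}\int_{B_R(x_0)}\int_{B_R(x_0)}|d_su|^p\frac{dxdy}{|x-y|^n}+\mathrm{Tail}_q(u-(u)_{B_R(x_0)};B_R(x_0))^p$; $[u]_{M^{p,\lambda}(B_R(x_0))}=\sup_{B_\rho(z)\subset B_R(x_0)}(\rho^{-\lambda}\mathcal{E}(u;B_\rho(z)))^{1/p}$. *)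

theory Defs
  imports "HOL-Analysis.Analysis"
begin

coinductive smooth_fun :: "('a::euclidean_space \<Rightarrow> real) \<Rightarrow> bool" where
  "f differentiable_on UNIV \<Longrightarrow>
   (\<forall>b\<in>Basis. smooth_fun (\<lambda>x. frechet_derivative f (at x) b)) \<Longrightarrow> smooth_fun f"

definition avg :: "'a::euclidean_space set \<Rightarrow> ('a \<Rightarrow> real) \<Rightarrow> real" where
  "avg B f = (LINT x:B|lebesgue. f x) / measure lebesgue B"

definition bmo_seminorm :: "'a::euclidean_space set \<Rightarrow> ('a \<Rightarrow> real) \<Rightarrow> ennreal" where
  "bmo_seminorm U f = (SUP (z, r) \<in> {(z, r). r > 0 \<and> ball z r \<subseteq> U}.
      (\<integral>\<^sup>+ x \<in> ball z r. ennreal \<bar>f x - avg (ball z r) f\<bar> \<partial>lebesgue) / emeasure lebesgue (ball z r))"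

definition ds :: "real \<Rightarrow> ('a::euclidean_space \<Rightarrow> real) \<Rightarrow> 'a \<Rightarrow> 'a \<Rightarrow> real" where
  "ds s u x y = (u x - u y) / norm (x - y) powr s"

(* R^{sp} \<integral>_{R^n \ B_R(x0)} |v(y)|^q / |y-x0|^{n+sp} dy, i.e. Tail_q(v;B_R(x0))^q *)
definition tail_integral :: "real \<Rightarrow> real \<Rightarrow> real \<Rightarrow> ('a::euclidean_space \<Rightarrow> real) \<Rightarrow> 'a \<Rightarrow> real \<Rightarrow> ennreal" where
  "tail_integral s p q v x0 R = ennreal (R powr (s * p)) *
     (\<integral>\<^sup>+ y \<in> - ball x0 R. ennreal (\<bar>v y\<bar> powr q / norm (y - x0) powr (real DIM('a) + s * p)) \<partial>lebesgue)"

definition epow :: "ennreal \<Rightarrow> real \<Rightarrow> ennreal" where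
  "epow x a = (if x = top then top else ennreal (enn2real x powr a))"

(* Tail_q(v;B_R(x0))^p = (Tail_q^q)^{p/q} *)
definition tail_p :: "real \<Rightarrow> real \<Rightarrow> real \<Rightarrow> ('a::euclidean_space \<Rightarrow> real) \<Rightarrow> 'a \<Rightarrow> real \<Rightarrow> ennreal" where
  "tail_p s p q v x0 R = epow (tail_integral s p q v x0 R) (p / q)"

definition energy :: "real \<Rightarrow> real \<Rightarrow> real \<Rightarrow> ('a::euclidean_space \<Rightarrow> real) \<Rightarrow> 'a \<Rightarrow> real \<Rightarrow> ennreal" where
  "energy s p q u x0 R =
     ennreal (R powr (s * p) / measure lebesgue (ball (0::'a) R)) *
       (\<integral>\<^sup>+ x \<in> ball x0 R. \<integral>\<^sup>+ y \<in> ball x0 R.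
          ennreal (\<bar>ds s u x y\<bar> powr p / norm (x - y) powr real DIM('a)) \<partial>lebesgue \<partial>lebesgue)
     + tail_p s p q (\<lambda>y. u y - avg (ball x0 R) u) x0 R"

definition morrey_seminorm :: "real \<Rightarrow> real \<Rightarrow> real \<Rightarrow> real \<Rightarrow> ('a::euclidean_space \<Rightarrow> real) \<Rightarrow> 'a \<Rightarrow> real \<Rightarrow> ennreal" where
  "morrey_seminorm s p q lam u x0 R = (SUP (z, \<rho>) \<in> {(z, \<rho>). \<rho> > 0 \<and> ball z \<rho> \<subseteq> ball x0 R}.
      epow (ennreal (\<rho> powr (- lam)) * energy s p q u z \<rho>) (1 / p))"

end

theory Submission
  imports Defs
begin

(* Comparing each ball with its double shows that the averages of u over the balls B_r(z) inside
   B_1 drift away from (u)_{B_1} at most like [u]_{BMO(B_1)} log(1/r), so that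
   r |(u)_{B_r(z)} - (u)_{B_1}| <= C [u]_{BMO(B_1)}.  On a small ball B_r(z) the function
   (u - (u)_{B_1}) psi therefore stays, on average, within C [u]_{BMO(B_1)} of the constant
   psi(z) ((u)_{B_r(z)} - (u)_{B_1}): the error is |u - (u)_{B_r(z)}| |psi| plus
   r Lip(psi) |(u)_{B_r(z)} - (u)_{B_1}|.  Large balls are controlled by the L^1 norm of
   (u - (u)_{B_1}) psi, and small balls far from B_{3/4} see only zeros.  Hence the BMO seminorm
   of u on B_1 alone bounds the left-hand side. *)

definition mean_osc_bound :: "'a::euclidean_space set \<Rightarrow> ('a \<Rightarrow> real) \<Rightarrow> real \<Rightarrow> bool" where
  "mean_osc_bound U f m \<longleftrightarrow> (\<forall>z r. 0 < r \<longrightarrow> ball z r \<subseteq> U \<longrightarrow>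
     (LINT x:ball z r|lebesgue. \<bar>f x - avg (ball z r) f\<bar>) \<le> m * measure lebesgue (ball z r))"

lemma measure_lebesgue_ball:
  fixes c :: "'a::euclidean_space"
  assumes "0 \<le> r"
  shows "measure lebesgue (ball c r) = unit_ball_vol (DIM('a)) * r ^ DIM('a)"
  using content_ball[of r c] assms by (simp add: measure_completion)

lemma measure_lebesgue_ball_pos:
  "0 < r \<Longrightarrow> 0 < measure lebesgue (ball (c::'a::euclidean_space) r)"
  by (simp add: measure_lebesgue_ball)

lemma measure_lebesgue_ball_scale:
  fixes w z :: "'a::euclidean_space"
  assumes "0 < r" "0 \<le> R"
  shows "measure lebesgue (ball w R) = (R / r) ^ DIM('a) * measure lebesgue (ball z r)"
  unfolding measure_lebesgue_ball[OF assms(2)] measure_lebesgue_ball[OF less_imp_le[OF assms(1)]]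
  using assms by (simp add: power_divide)

lemma emeasure_lebesgue_ball:
  "emeasure lebesgue (ball (c::'a::euclidean_space) r) = ennreal (measure lebesgue (ball c r))"
  by (simp add: emeasure_eq_measure2)

lemma emeasure_lborel_ball_finite [simp]:
  "emeasure lborel (ball (c::'a::euclidean_space) r) < top"
  using emeasure_bounded_finite[of "ball c r"] by simp

lemma set_integrable_const_finite:
  assumes "A \<in> sets M" "emeasure M A < \<infinity>"
  shows "set_integrable M A (\<lambda>_. c::real)"
  unfolding set_integrable_def using integrable_real_indicator[OF assms]
  by (simp add: integrable_mult_left)

lemma set_integral_mono_set:
  fixes h :: "_ \<Rightarrow> real"
  assumes h: "set_integrable M A h" and B: "B \<in> sets M"
    and nonneg: "\<And>x. x \<in> A \<Longrightarrow> 0 \<le> h x" and vanish: "\<And>x. x \<in> B \<Longrightarrow> x \<notin> A \<Longrightarrow> h x = 0"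
  shows "(LINT x:B|M. h x) \<le> (LINT x:A|M. h x)"
proof -
  have "(\<lambda>x. indicator B x *\<^sub>R h x) = (\<lambda>x. indicator B x *\<^sub>R (indicator A x *\<^sub>R h x))"
    using vanish by (auto simp: fun_eq_iff split: split_indicator)
  then have hB: "set_integrable M B h"
    using integrable_mult_indicator[OF B h[unfolded set_integrable_def]]
    unfolding set_integrable_def by simp
  show ?thesis
    using hB h unfolding set_lebesgue_integral_def set_integrable_def
    by (intro integral_mono) (use nonneg vanish in \<open>auto split: split_indicator\<close>)
qed

lemma integrable_mult_bounded_vanishing:
  fixes g h :: "'a \<Rightarrow> real"
  assumes g: "set_integrable M S g" and h: "h \<in> borel_measurable M" "\<And>x. \<bar>h x\<bar> \<le> K"
    and vanish: "\<And>x. x \<notin> S \<Longrightarrow> h x = 0"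
  shows "integrable M (\<lambda>x. g x * h x)"
proof -
  have gS: "integrable M (\<lambda>x. indicator S x * g x)"
    using g by (simp add: set_integrable_def)
  have "integrable M (\<lambda>x. h x * (indicator S x * g x))"
  proof (rule Bochner_Integration.integrable_bound[OF integrable_mult_right[OF gS, of K]])
    show "(\<lambda>x. h x * (indicator S x * g x)) \<in> borel_measurable M"
      using h(1) borel_measurable_integrable[OF gS] by measurable
    show "AE x in M. norm (h x * (indicator S x * g x)) \<le> norm (K * (indicator S x * g x))"
      using h(2) by (intro AE_I2) (simp add: abs_mult mult_right_mono abs_le_D1 order_trans[OF h(2)])
  qed
  moreover have "(\<lambda>x. h x * (indicator S x * g x)) = (\<lambda>x. g x * h x)"
    using vanish by (auto simp: fun_eq_iff split: split_indicator)
  ultimately show ?thesis by simp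
qed

lemma mean_oscillation_le_twice:
  fixes f :: "'a \<Rightarrow> real"
  assumes f: "set_integrable M B f" and B: "B \<in> sets M" "emeasure M B < \<infinity>" "0 < measure M B"
  shows "(LINT x:B|M. \<bar>f x - (LINT y:B|M. f y) / measure M B\<bar>) \<le> 2 * (LINT x:B|M. \<bar>f x - b\<bar>)"
proof -
  define A where "A = (LINT y:B|M. f y) / measure M B"
  define \<mu> where "\<mu> = measure M B"
  have const: "\<And>c. set_integrable M B (\<lambda>_. c::real)" using set_integrable_const_finite[OF B(1,2)] .
  have fb: "set_integrable M B (\<lambda>x. \<bar>f x - b\<bar>)"
    by (intro set_integrable_abs set_integral_diff f const)
  have fA: "set_integrable M B (\<lambda>x. \<bar>f x - A\<bar>)"
    by (intro set_integrable_abs set_integral_diff f const)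
  have "(LINT x:B|M. \<bar>f x - A\<bar>) \<le> (LINT x:B|M. \<bar>f x - b\<bar> + \<bar>b - A\<bar>)"
    by (rule set_integral_mono[OF fA set_integral_add(1)[OF fb const]]) auto
  also have "\<dots> = (LINT x:B|M. \<bar>f x - b\<bar>) + \<mu> * \<bar>b - A\<bar>"
    using set_integral_add(2)[OF fb const] set_integral_const[OF B(1), of "\<bar>b - A\<bar>"] B(2)
    by (simp add: \<mu>_def)
  also have "\<mu> * \<bar>b - A\<bar> = \<bar>LINT x:B|M. b - f x\<bar>"
  proof -
    have "(LINT x:B|M. b - f x) = \<mu> * b - (LINT y:B|M. f y)"
      using set_integral_diff(2)[OF const f] set_integral_const[OF B(1), of b] B(2)
      by (simp add: \<mu>_def)
    also have "(LINT y:B|M. f y) = \<mu> * A" using B(3) by (simp add: A_def \<mu>_def)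
    finally show ?thesis using B(3) by (simp add: \<mu>_def abs_mult right_diff_distrib[symmetric])
  qed
  also have "\<bar>LINT x:B|M. b - f x\<bar> \<le> (LINT x:B|M. \<bar>f x - b\<bar>)"
    using set_integral_norm_bound[OF set_integral_diff(1)[OF const f]] by (simp add: abs_minus_commute)
  finally show ?thesis by (simp add: A_def)
qed

lemma abs_avg_minus_le:
  fixes u :: "'a::euclidean_space \<Rightarrow> real"
  assumes u: "set_integrable lebesgue B u"
    and B: "B \<in> sets lebesgue" "emeasure lebesgue B < \<infinity>" "0 < measure lebesgue B"
  shows "\<bar>avg B u - c\<bar> \<le> (LINT x:B|lebesgue. \<bar>u x - c\<bar>) / measure lebesgue B"
proof -
  have const: "set_integrable lebesgue B (\<lambda>_. c)" using set_integrable_const_finite[OF B(1,2)] .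
  have "avg B u - c = (LINT x:B|lebesgue. u x - c) / measure lebesgue B"
    using set_integral_diff(2)[OF u const] set_integral_const[OF B(1), of c] B(2,3)
    by (simp add: avg_def field_simps)
  then show ?thesis
    using set_integral_norm_bound[OF set_integral_diff(1)[OF u const]] B(3)
    by (simp add: divide_right_mono)
qed

lemma bmo_ball_quotient:
  fixes f :: "'a::euclidean_space \<Rightarrow> real"
  assumes f: "set_integrable lebesgue (ball z r) f" and r: "0 < r"
  shows "(\<integral>\<^sup>+ x \<in> ball z r. ennreal \<bar>f x - avg (ball z r) f\<bar> \<partial>lebesgue) / emeasure lebesgue (ball z r)
       = ennreal ((LINT x:ball z r|lebesgue. \<bar>f x - avg (ball z r) f\<bar>) / measure lebesgue (ball z r))"
proof -
  define g where "g x = \<bar>f x - avg (ball z r) f\<bar>" for x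
  have "set_integrable lebesgue (ball z r) g"
    unfolding g_def by (intro set_integrable_abs set_integral_diff f set_integrable_const_finite) auto
  then have g: "integrable lebesgue (\<lambda>x. g x * indicator (ball z r) x)"
    unfolding set_integrable_def by (simp add: mult.commute)
  have "(\<integral>\<^sup>+ x \<in> ball z r. ennreal (g x) \<partial>lebesgue) = ennreal (\<integral>x. g x * indicator (ball z r) x \<partial>lebesgue)"
    unfolding nn_integral_set_ennreal by (rule nn_integral_eq_integral[OF g]) (auto simp: g_def)
  moreover have "0 \<le> (LINT x:ball z r|lebesgue. g x)"
    unfolding set_lebesgue_integral_def by (intro integral_nonneg_AE) (auto simp: g_def)
  ultimately show ?thesis
    using divide_ennreal measure_lebesgue_ball_pos[OF r, of z]
    by (simp add: g_def emeasure_lebesgue_ball set_lebesgue_integral_def mult.commute)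
qed

lemma bmo_seminorm_le_iff:
  fixes f :: "'a::euclidean_space \<Rightarrow> real"
  assumes f: "\<And>z r. 0 < r \<Longrightarrow> ball z r \<subseteq> U \<Longrightarrow> set_integrable lebesgue (ball z r) f"
    and m: "0 \<le> m"
  shows "bmo_seminorm U f \<le> ennreal m \<longleftrightarrow> mean_osc_bound U f m"
proof -
  have "(\<integral>\<^sup>+ x \<in> ball z r. ennreal \<bar>f x - avg (ball z r) f\<bar> \<partial>lebesgue) / emeasure lebesgue (ball z r)
          \<le> ennreal m
      \<longleftrightarrow> (LINT x:ball z r|lebesgue. \<bar>f x - avg (ball z r) f\<bar>) \<le> m * measure lebesgue (ball z r)"
    if "0 < r" "ball z r \<subseteq> U" for z r
    using bmo_ball_quotient[OF f[OF that] that(1)] measure_lebesgue_ball_pos[OF that(1), of z] m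
    by (simp add: pos_divide_le_eq)
  then show ?thesis
    unfolding bmo_seminorm_def mean_osc_bound_def by (auto simp: SUP_le_iff)
qed

lemma avg_ball_diff_le:
  fixes u :: "'a::euclidean_space \<Rightarrow> real"
  assumes osc: "mean_osc_bound U u m" and u: "set_integrable lebesgue (ball w R) u"
    and sub: "ball z r \<subseteq> ball w R" "ball w R \<subseteq> U" and r: "0 < r"
  shows "\<bar>avg (ball z r) u - avg (ball w R) u\<bar> \<le> (R / r) ^ DIM('a) * m"
proof -
  define c where "c = avg (ball w R) u"
  have R: "0 < R"
    using sub(1) r by (metis ball_eq_empty centre_in_ball empty_iff not_less subset_empty)
  have u_zr: "set_integrable lebesgue (ball z r) u"
    by (rule set_integrable_subset[OF u _ sub(1)]) auto
  have uc: "set_integrable lebesgue (ball w R) (\<lambda>x. \<bar>u x - c\<bar>)"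
    by (intro set_integrable_abs set_integral_diff u set_integrable_const_finite) auto
  have "\<bar>avg (ball z r) u - c\<bar> \<le> (LINT x:ball z r|lebesgue. \<bar>u x - c\<bar>) / measure lebesgue (ball z r)"
    using measure_lebesgue_ball_pos[OF r] by (intro abs_avg_minus_le[OF u_zr]) auto
  also have "\<dots> \<le> (LINT x:ball w R|lebesgue. \<bar>u x - c\<bar>) / measure lebesgue (ball z r)"
    using sub(1) by (intro divide_right_mono set_integral_mono_set[OF uc]) auto
  also have "\<dots> \<le> m * measure lebesgue (ball w R) / measure lebesgue (ball z r)"
    using osc sub(2) R unfolding mean_osc_bound_def c_def by (intro divide_right_mono) auto
  also have "\<dots> = (R / r) ^ DIM('a) * m"
    using measure_lebesgue_ball_scale[OF r, of R w z] measure_lebesgue_ball_pos[OF r, of z] R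
    by simp
  finally show ?thesis by (simp add: c_def)
qed

lemma avg_ball_half_diff_le:
  fixes u :: "'a::euclidean_space \<Rightarrow> real"
  assumes osc: "mean_osc_bound U u m" and u: "set_integrable lebesgue (ball w R) u"
    and sub: "ball z (2 * t) \<subseteq> ball w R" "ball w R \<subseteq> U" and t: "0 < t"
  shows "\<bar>avg (ball z t) u - avg (ball z (2 * t)) u\<bar> \<le> 2 ^ DIM('a) * m"
  using avg_ball_diff_le[OF osc set_integrable_subset[OF u _ sub(1)] subset_ball
      order_trans[OF sub] t] t
  by simp

lemma radius_mult_avg_ball_diff_le:
  fixes u :: "'a::euclidean_space \<Rightarrow> real"
  assumes osc: "mean_osc_bound U u m" and m: "0 \<le> m" and u: "set_integrable lebesgue (ball w R) u"
    and sub: "ball z \<rho> \<subseteq> ball w R" "ball w R \<subseteq> U" and r: "0 < r" "r \<le> \<rho>"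
  shows "r * \<bar>avg (ball z r) u - avg (ball w R) u\<bar> \<le> \<rho> * (2 * R / \<rho>) ^ DIM('a) * m"
proof -
  define a where "a = avg (ball w R) u"
  define B where "B = \<rho> * (2 * R / \<rho>) ^ DIM('a) * m"
  have "dist z w + \<rho> \<le> R" using sub(1) r by (auto simp: ball_subset_ball_iff)
  then have \<rho>R: "\<rho> \<le> R" using zero_le_dist[of z w] by linarith
  have sub_z: "ball z t \<subseteq> ball w R" if "t \<le> \<rho>" for t
    using sub(1) subset_ball[OF that] by blast
  have base: "t * \<bar>avg (ball z t) u - a\<bar> \<le> B" if t: "0 < t" "t \<le> \<rho>" "\<rho> \<le> 2 * t" for t
  proof -
    have "\<bar>avg (ball z t) u - a\<bar> \<le> (R / t) ^ DIM('a) * m"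
      unfolding a_def by (rule avg_ball_diff_le[OF osc u sub_z[OF t(2)] sub(2) t(1)])
    also have "\<dots> \<le> (2 * R / \<rho>) ^ DIM('a) * m"
      using t r \<rho>R m by (intro mult_right_mono power_mono) (auto simp: field_simps)
    finally have "\<bar>avg (ball z t) u - a\<bar> \<le> (2 * R / \<rho>) ^ DIM('a) * m" .
    then have "t * \<bar>avg (ball z t) u - a\<bar> \<le> \<rho> * ((2 * R / \<rho>) ^ DIM('a) * m)"
      using t r \<rho>R m by (intro mult_mono) auto
    then show ?thesis by (simp add: B_def mult.assoc)
  qed
  have "t * \<bar>avg (ball z t) u - a\<bar> \<le> B" if "0 < t" "t \<le> \<rho>" "\<rho> \<le> 2 ^ Suc k * t" for k t
    using that
  proof (induction k arbitrary: t)
    case 0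
    then show ?case using base by simp
  next
    case (Suc k)
    show ?case
    proof (cases "\<rho> \<le> 2 * t")
      case True
      then show ?thesis using base Suc.prems by simp
    next
      case False
      have IH: "(2 * t) * \<bar>avg (ball z (2 * t)) u - a\<bar> \<le> B"
        using Suc.prems False by (intro Suc.IH) (auto simp: mult_ac)
      have sub_2t: "ball z (2 * t) \<subseteq> ball w R" using False by (intro sub_z) auto
      have step: "\<bar>avg (ball z t) u - avg (ball z (2 * t)) u\<bar> \<le> 2 ^ DIM('a) * m"
        using avg_ball_half_diff_le[OF osc u sub_2t sub(2)] Suc.prems by simp
      have "(2::real) ^ DIM('a) \<le> (2 * R / \<rho>) ^ DIM('a)"
        using r \<rho>R by (intro power_mono) (auto simp: field_simps)
      then have "\<rho> / 2 * (2 ^ DIM('a) * m) \<le> B / 2"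
        unfolding B_def using r m by (simp add: mult_left_mono mult_right_mono)
      moreover have "t * \<bar>avg (ball z t) u - avg (ball z (2 * t)) u\<bar> \<le> \<rho> / 2 * (2 ^ DIM('a) * m)"
        using False step Suc.prems by (intro mult_mono) auto
      moreover have "t * \<bar>avg (ball z t) u - a\<bar>
          \<le> t * \<bar>avg (ball z t) u - avg (ball z (2 * t)) u\<bar> + t * \<bar>avg (ball z (2 * t)) u - a\<bar>"
        using Suc.prems by (simp add: distrib_left[symmetric] mult_left_mono)
      ultimately show ?thesis using IH by linarith
    qed
  qed
  moreover obtain k :: nat where "\<rho> / (2 * r) < 2 ^ k"
    using real_arch_pow[of 2 "\<rho> / (2 * r)"] by auto
  then have "\<rho> \<le> 2 ^ Suc k * r" using r by (simp add: field_simps)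
  ultimately show ?thesis using r by (simp add: a_def B_def)
qed

lemma mean_osc_mult_lipschitz_le:
  fixes u \<psi> :: "'a::euclidean_space \<Rightarrow> real"
  assumes f: "set_integrable lebesgue (ball z r) (\<lambda>x. (u x - a) * \<psi> x)"
    and u: "set_integrable lebesgue (ball z r) u" and r: "0 < r"
    and K: "\<And>x. x \<in> ball z r \<Longrightarrow> \<bar>\<psi> x\<bar> \<le> K" and L: "L-lipschitz_on (ball z r) \<psi>"
  shows "(LINT x:ball z r|lebesgue. \<bar>(u x - a) * \<psi> x - avg (ball z r) (\<lambda>x. (u x - a) * \<psi> x)\<bar>)
    \<le> 2 * (K * (LINT x:ball z r|lebesgue. \<bar>u x - avg (ball z r) u\<bar>)
           + L * (r * \<bar>avg (ball z r) u - a\<bar>) * measure lebesgue (ball z r))"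
proof -
  define ub where "ub = avg (ball z r) u"
  define \<mu> where "\<mu> = measure lebesgue (ball z r)"
  have const: "\<And>c. set_integrable lebesgue (ball z r) (\<lambda>_. c::real)"
    by (rule set_integrable_const_finite) auto
  have u_ub: "set_integrable lebesgue (ball z r) (\<lambda>x. K * \<bar>u x - ub\<bar>)"
    by (intro set_integrable_mult_right set_integrable_abs set_integral_diff u const)
  have pointwise: "\<bar>(u x - a) * \<psi> x - \<psi> z * (ub - a)\<bar> \<le> K * \<bar>u x - ub\<bar> + L * (r * \<bar>ub - a\<bar>)"
    if x: "x \<in> ball z r" for x
  proof -
    have "\<bar>\<psi> x - \<psi> z\<bar> \<le> L * dist x z"
      using lipschitz_onD[OF L x centre_in_ball[THEN iffD2, OF r]] by (simp add: dist_real_def)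
    also have "\<dots> \<le> L * r"
      using x lipschitz_on_nonneg[OF L] by (intro mult_left_mono) (auto simp: dist_commute)
    finally have lip: "\<bar>\<psi> x - \<psi> z\<bar> \<le> L * r" .
    have "\<bar>(u x - a) * \<psi> x - \<psi> z * (ub - a)\<bar> = \<bar>(u x - ub) * \<psi> x + (ub - a) * (\<psi> x - \<psi> z)\<bar>"
      by (rule arg_cong[where f = abs]) (simp add: algebra_simps)
    also have "\<dots> \<le> \<bar>u x - ub\<bar> * \<bar>\<psi> x\<bar> + \<bar>ub - a\<bar> * \<bar>\<psi> x - \<psi> z\<bar>"
      by (metis abs_mult abs_triangle_ineq)
    also have "\<dots> \<le> \<bar>u x - ub\<bar> * K + \<bar>ub - a\<bar> * (L * r)"
      by (intro add_mono mult_left_mono K x lip) auto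
    finally show ?thesis by (simp add: algebra_simps)
  qed
  have "(LINT x:ball z r|lebesgue. \<bar>(u x - a) * \<psi> x - avg (ball z r) (\<lambda>x. (u x - a) * \<psi> x)\<bar>)
      \<le> 2 * (LINT x:ball z r|lebesgue. \<bar>(u x - a) * \<psi> x - \<psi> z * (ub - a)\<bar>)"
    using mean_oscillation_le_twice[OF f] measure_lebesgue_ball_pos[OF r] by (simp add: avg_def)
  also have "(LINT x:ball z r|lebesgue. \<bar>(u x - a) * \<psi> x - \<psi> z * (ub - a)\<bar>)
      \<le> (LINT x:ball z r|lebesgue. K * \<bar>u x - ub\<bar> + L * (r * \<bar>ub - a\<bar>))"
    by (intro set_integral_mono pointwise set_integrable_abs set_integral_diff set_integral_add
        f u_ub const)
  also have "\<dots> = K * (LINT x:ball z r|lebesgue. \<bar>u x - ub\<bar>) + L * (r * \<bar>ub - a\<bar>) * \<mu>"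
  proof -
    have "(LINT x:ball z r|lebesgue. L * (r * \<bar>ub - a\<bar>)) = L * (r * \<bar>ub - a\<bar>) * \<mu>"
      unfolding \<mu>_def by (subst set_integral_const) (auto simp: emeasure_lebesgue_ball)
    then show ?thesis
      unfolding set_integral_add(2)[OF u_ub const] set_integral_mult_right by simp
  qed
  finally show ?thesis by (simp add: ub_def \<mu>_def)
qed

lemma mean_osc_mult_lipschitz_interior_le:
  fixes u \<psi> :: "'a::euclidean_space \<Rightarrow> real"
  assumes osc: "mean_osc_bound (ball w R) u m" and m: "0 \<le> m"
    and u: "set_integrable lebesgue (ball w R) u"
    and f: "set_integrable lebesgue (ball z r) (\<lambda>x. (u x - avg (ball w R) u) * \<psi> x)"
    and K: "\<And>x. \<bar>\<psi> x\<bar> \<le> K" and L: "L-lipschitz_on (ball w R) \<psi>"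
    and sub: "ball z \<rho> \<subseteq> ball w R" and r: "0 < r" "r \<le> \<rho>"
  shows "(LINT x:ball z r|lebesgue.
           \<bar>(u x - avg (ball w R) u) * \<psi> x - avg (ball z r) (\<lambda>x. (u x - avg (ball w R) u) * \<psi> x)\<bar>)
    \<le> 2 * (K + L * \<rho> * (2 * R / \<rho>) ^ DIM('a)) * m * measure lebesgue (ball z r)"
proof -
  define a where "a = avg (ball w R) u"
  define \<mu> where "\<mu> = measure lebesgue (ball z r)"
  have sub_r: "ball z r \<subseteq> ball w R" using sub subset_ball[OF r(2)] by blast
  have u_r: "set_integrable lebesgue (ball z r) u" by (rule set_integrable_subset[OF u _ sub_r]) auto
  have drift: "r * \<bar>avg (ball z r) u - a\<bar> \<le> \<rho> * (2 * R / \<rho>) ^ DIM('a) * m"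
    unfolding a_def by (rule radius_mult_avg_ball_diff_le[OF osc m u sub order_refl r])
  have "(LINT x:ball z r|lebesgue. \<bar>(u x - a) * \<psi> x - avg (ball z r) (\<lambda>x. (u x - a) * \<psi> x)\<bar>)
      \<le> 2 * (K * (LINT x:ball z r|lebesgue. \<bar>u x - avg (ball z r) u\<bar>)
             + L * (r * \<bar>avg (ball z r) u - a\<bar>) * \<mu>)"
    unfolding \<mu>_def a_def
    by (rule mean_osc_mult_lipschitz_le[OF f u_r r(1) K lipschitz_on_subset[OF L sub_r]])
  also have "\<dots> \<le> 2 * (K * (m * \<mu>) + L * (\<rho> * (2 * R / \<rho>) ^ DIM('a) * m) * \<mu>)"
    using osc r sub_r K[of z] lipschitz_on_nonneg[OF L] drift measure_lebesgue_ball_pos[OF r(1)]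
    unfolding mean_osc_bound_def \<mu>_def
    by (intro mult_left_mono add_mono mult_right_mono) auto
  finally show ?thesis by (simp add: a_def \<mu>_def algebra_simps)
qed

lemma integral_abs_cutoff_le:
  fixes u \<psi> :: "'a::euclidean_space \<Rightarrow> real"
  assumes osc: "mean_osc_bound (ball w R) u m" and R: "0 < R"
    and u: "set_integrable lebesgue (ball w R) u"
    and \<psi>: "\<psi> \<in> borel_measurable lebesgue" "\<And>x. \<bar>\<psi> x\<bar> \<le> K"
    and vanish: "\<And>x. x \<notin> ball w R \<Longrightarrow> \<psi> x = 0"
  shows "integrable lebesgue (\<lambda>x. (u x - avg (ball w R) u) * \<psi> x)"
    and "(LINT x|lebesgue. \<bar>(u x - avg (ball w R) u) * \<psi> x\<bar>) \<le> K * m * measure lebesgue (ball w R)"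
proof -
  define f where "f x = (u x - avg (ball w R) u) * \<psi> x" for x
  have u_avg: "set_integrable lebesgue (ball w R) (\<lambda>x. u x - avg (ball w R) u)"
    by (intro set_integral_diff u set_integrable_const_finite) auto
  show f: "integrable lebesgue (\<lambda>x. (u x - avg (ball w R) u) * \<psi> x)"
    by (rule integrable_mult_bounded_vanishing[OF u_avg \<psi> vanish])
  have "(LINT x|lebesgue. \<bar>f x\<bar>) = (LINT x:ball w R|lebesgue. \<bar>f x\<bar>)"
    unfolding set_lebesgue_integral_def
    by (intro Bochner_Integration.integral_cong) (auto simp: f_def vanish split: split_indicator)
  also have "\<dots> \<le> (LINT x:ball w R|lebesgue. K * \<bar>u x - avg (ball w R) u\<bar>)"
  proof (rule set_integral_mono)
    show "set_integrable lebesgue (ball w R) (\<lambda>x. \<bar>f x\<bar>)"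
      using f unfolding f_def set_integrable_def
      by (intro integrable_mult_indicator integrable_abs) auto
    show "set_integrable lebesgue (ball w R) (\<lambda>x. K * \<bar>u x - avg (ball w R) u\<bar>)"
      using set_integrable_abs[OF u_avg] by simp
  qed (use \<psi>(2) in \<open>auto simp: f_def abs_mult mult.commute mult_right_mono\<close>)
  also have "\<dots> \<le> K * (m * measure lebesgue (ball w R))"
    using osc R \<psi>(2)[of w] unfolding mean_osc_bound_def by (auto intro: mult_left_mono)
  finally show "(LINT x|lebesgue. \<bar>(u x - avg (ball w R) u) * \<psi> x\<bar>) \<le> K * m * measure lebesgue (ball w R)"
    by (simp add: f_def mult.assoc)
qed

lemma mean_osc_ball_le_integral_abs:
  fixes f :: "'a::euclidean_space \<Rightarrow> real"
  assumes f: "integrable lebesgue f" and r: "0 < r"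
  shows "(LINT x:ball z r|lebesgue. \<bar>f x - avg (ball z r) f\<bar>) \<le> 2 * (LINT x|lebesgue. \<bar>f x\<bar>)"
proof -
  have f_ball: "set_integrable lebesgue (ball z r) f"
    unfolding set_integrable_def by (rule integrable_mult_indicator[OF _ f]) auto
  have "(LINT x:ball z r|lebesgue. \<bar>f x - avg (ball z r) f\<bar>) \<le> 2 * (LINT x:ball z r|lebesgue. \<bar>f x - 0\<bar>)"
    using mean_oscillation_le_twice[OF f_ball, where b = 0] measure_lebesgue_ball_pos[OF r]
    by (simp add: avg_def)
  moreover have "(LINT x:ball z r|lebesgue. \<bar>f x - 0\<bar>) \<le> (LINT x|lebesgue. \<bar>f x\<bar>)"
    using set_integral_mono_set[of lebesgue UNIV "\<lambda>x. \<bar>f x\<bar>" "ball z r"] f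
    by (simp add: set_integrable_def set_lebesgue_integral_def)
  ultimately show ?thesis by linarith
qed

lemma mean_osc_ball_vanishing:
  fixes f :: "'a::euclidean_space \<Rightarrow> real"
  assumes "\<And>x. x \<in> ball z r \<Longrightarrow> f x = 0"
  shows "(LINT x:ball z r|lebesgue. \<bar>f x - avg (ball z r) f\<bar>) = 0"
proof -
  have "avg (ball z r) f = 0"
    using set_lebesgue_integral_cong[of "ball z r" lebesgue f "\<lambda>_. 0"] assms by (simp add: avg_def)
  then show ?thesis
    using set_lebesgue_integral_cong[of "ball z r" lebesgue "\<lambda>x. \<bar>f x - 0\<bar>" "\<lambda>_. 0"] assms by simp
qed

lemma mean_osc_bound_cutoff:
  fixes u \<psi> :: "'a::euclidean_space \<Rightarrow> real"
  assumes osc: "mean_osc_bound (ball 0 1) u m" and m: "0 \<le> m"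
    and u: "set_integrable lebesgue (ball 0 1) u"
    and \<psi>: "\<psi> \<in> borel_measurable lebesgue" "\<And>x. \<bar>\<psi> x\<bar> \<le> K"
    and L: "L-lipschitz_on (ball 0 1) \<psi>"
    and vanish: "\<And>x. x \<notin> ball 0 (3/4) \<Longrightarrow> \<psi> x = 0"
  shows "mean_osc_bound UNIV (\<lambda>x. (u x - avg (ball 0 1) u) * \<psi> x) (2 * 16 ^ DIM('a) * (K + L) * m)"
  unfolding mean_osc_bound_def
proof (intro allI impI)
  fix z :: 'a and r :: real
  assume r: "0 < r"
  define f where "f = (\<lambda>x. (u x - avg (ball 0 1) u) * \<psi> x)"
  define \<mu> where "\<mu> = measure lebesgue (ball z r)"
  have \<mu>: "0 < \<mu>" using measure_lebesgue_ball_pos[OF r] by (simp add: \<mu>_def)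
  have K: "0 \<le> K" using \<psi>(2)[of 0] by linarith
  have L0: "0 \<le> L" using lipschitz_on_nonneg[OF L] .
  have f_int: "integrable lebesgue f" "(LINT x|lebesgue. \<bar>f x\<bar>) \<le> K * m * measure lebesgue (ball (0::'a) 1)"
    unfolding f_def by (rule integral_abs_cutoff_le[OF osc _ u \<psi>]; use vanish in auto)+
  consider "1/8 \<le> r" | "r < 1/8" "7/8 \<le> norm z" | "r < 1/8" "norm z < 7/8" by linarith
  then have "(LINT x:ball z r|lebesgue. \<bar>f x - avg (ball z r) f\<bar>) \<le> 2 * 16 ^ DIM('a) * (K + L) * m * \<mu>"
  proof cases
    case 1
    have "(LINT x:ball z r|lebesgue. \<bar>f x - avg (ball z r) f\<bar>) \<le> 2 * (LINT x|lebesgue. \<bar>f x\<bar>)"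
      by (rule mean_osc_ball_le_integral_abs[OF f_int(1) r])
    also have "\<dots> \<le> 2 * (K * m * ((1 / r) ^ DIM('a) * \<mu>))"
      using f_int(2) measure_lebesgue_ball_scale[OF r, of 1 0 z] by (simp add: \<mu>_def)
    also have "\<dots> \<le> 2 * (K * m * (16 ^ DIM('a) * \<mu>))"
      using 1 K m \<mu> by (intro mult_left_mono mult_right_mono power_mono) (auto simp: field_simps)
    also have "\<dots> \<le> 2 * 16 ^ DIM('a) * (K + L) * m * \<mu>"
      using L0 m \<mu> by (simp add: algebra_simps mult_nonneg_nonneg)
    finally show ?thesis .
  next
    case 2
    have "f x = 0" if "x \<in> ball z r" for x
    proof -
      have "norm z \<le> norm x + dist z x" by (metis dist_norm norm_triangle_sub)
      then show ?thesis using 2 that vanish[of x] by (auto simp: f_def)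
    qed
    then show ?thesis using mean_osc_ball_vanishing[of z r f] K L0 m \<mu> by simp
  next
    case 3
    have sub8: "ball z (1/8) \<subseteq> ball 0 1" using 3 by (auto simp: ball_subset_ball_iff)
    have f_ball: "set_integrable lebesgue (ball z r) f"
      unfolding set_integrable_def by (rule integrable_mult_indicator[OF _ f_int(1)]) auto
    have "(LINT x:ball z r|lebesgue. \<bar>f x - avg (ball z r) f\<bar>)
        \<le> 2 * (K + L * (1/8) * (2 * 1 / (1/8)) ^ DIM('a)) * m * \<mu>"
      unfolding f_def \<mu>_def
      by (rule mean_osc_mult_lipschitz_interior_le[OF osc m u f_ball[unfolded f_def] \<psi>(2) L sub8 r])
        (use 3 in auto)
    also have "\<dots> = 2 * (K + L * 16 ^ DIM('a) / 8) * m * \<mu>" by simp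
    also have "\<dots> \<le> 2 * (16 ^ DIM('a) * (K + L)) * m * \<mu>"
    proof (intro mult_right_mono mult_left_mono)
      have "1 \<le> (16::real) ^ DIM('a)" by simp
      from mult_right_mono[OF this K] mult_right_mono[OF this L0]
      show "K + L * 16 ^ DIM('a) / 8 \<le> 16 ^ DIM('a) * (K + L)"
        using L0 by (simp add: algebra_simps)
    qed (use m \<mu> in auto)
    finally show ?thesis by (simp add: mult.assoc)
  qed
  then show "(LINT x:ball z r|lebesgue. \<bar>(u x - avg (ball 0 1) u) * \<psi> x
      - avg (ball z r) (\<lambda>x. (u x - avg (ball 0 1) u) * \<psi> x)\<bar>)
    \<le> 2 * 16 ^ DIM('a) * (K + L) * m * measure lebesgue (ball z r)"
    by (simp add: f_def \<mu>_def)
qed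

lemma bmo_seminorm_cutoff_le:
  fixes u \<psi> :: "'a::euclidean_space \<Rightarrow> real"
  assumes u: "set_integrable lebesgue (ball 0 1) u"
    and bmo: "bmo_seminorm (ball 0 1) u \<le> ennreal m" and m: "0 \<le> m"
    and \<psi>: "\<psi> \<in> borel_measurable lebesgue" "\<And>x. \<bar>\<psi> x\<bar> \<le> K"
    and L: "L-lipschitz_on (ball 0 1) \<psi>"
    and vanish: "\<And>x. x \<notin> ball 0 (3/4) \<Longrightarrow> \<psi> x = 0"
  shows "bmo_seminorm UNIV (\<lambda>x. (u x - avg (ball 0 1) u) * \<psi> x)
    \<le> ennreal (2 * 16 ^ DIM('a) * (K + L) * m)"
proof -
  have u_balls: "set_integrable lebesgue (ball z r) u" if "0 < r" "ball z r \<subseteq> ball 0 1" for z r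
    by (rule set_integrable_subset[OF u _ that(2)]) auto
  have osc: "mean_osc_bound (ball 0 1) u m"
    using bmo_seminorm_le_iff[where U = "ball 0 1", OF u_balls m] bmo by simp
  have "integrable lebesgue (\<lambda>x. (u x - avg (ball 0 1) u) * \<psi> x)"
    by (rule integral_abs_cutoff_le(1)[OF osc _ u \<psi>]) (use vanish in auto)
  then have f_balls: "set_integrable lebesgue (ball z r) (\<lambda>x. (u x - avg (ball 0 1) u) * \<psi> x)"
    for z r
    unfolding set_integrable_def by (rule integrable_mult_indicator[rotated]) auto
  have "0 \<le> K" using \<psi>(2)[of 0] by linarith
  then have "0 \<le> 2 * 16 ^ DIM('a) * (K + L) * m"
    using lipschitz_on_nonneg[OF L] m by simp
  then show ?thesis
    using bmo_seminorm_le_iff[OF f_balls] mean_osc_bound_cutoff[OF osc m u \<psi> L vanish] by simp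
qed

lemma smooth_fun_differentiable: "smooth_fun f \<Longrightarrow> f differentiable_on UNIV"
  by (erule smooth_fun.cases) simp

lemma smooth_fun_partial:
  "smooth_fun f \<Longrightarrow> b \<in> Basis \<Longrightarrow> smooth_fun (\<lambda>x. frechet_derivative f (at x) b)"
  by (erule smooth_fun.cases) simp

lemma smooth_fun_continuous: "smooth_fun f \<Longrightarrow> continuous_on UNIV f"
  by (rule differentiable_imp_continuous_on[OF smooth_fun_differentiable])

lemma smooth_fun_lipschitz_on_convex_compact:
  fixes f :: "'a::euclidean_space \<Rightarrow> real"
  assumes f: "smooth_fun f" and S: "convex S" "compact S"
  obtains L where "L-lipschitz_on S f"
proof -
  define F where "F x = frechet_derivative f (at x)" for x
  have der: "(f has_derivative F x) (at x)" for x
    using smooth_fun_differentiable[OF f]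
    by (simp add: F_def differentiable_on_def frechet_derivative_works[symmetric])
  have "continuous_on S (\<lambda>x. \<Sum>b\<in>Basis. \<bar>F x b\<bar>)"
    using smooth_fun_continuous[OF smooth_fun_partial[OF f]] unfolding F_def
    by (intro continuous_intros) (auto intro: continuous_on_subset)
  then obtain L where L: "0 \<le> L" "\<And>x. x \<in> S \<Longrightarrow> norm (\<Sum>b\<in>Basis. \<bar>F x b\<bar>) \<le> L"
    using continuous_on_compact_bound[OF S(2)] by blast
  have "onorm (F x) \<le> L" if "x \<in> S" for x
  proof -
    have "onorm (F x) \<le> (\<Sum>b\<in>Basis. \<bar>F x b\<bar>)"
      using onorm_componentwise[OF has_derivative_bounded_linear[OF der[of x]]] by simp
    also have "\<dots> \<le> L" using L(2)[OF that] by simp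
    finally show ?thesis .
  qed
  then have "dist (f x) (f y) \<le> L * dist x y" if "x \<in> S" "y \<in> S" for x y
    using differentiable_bound[OF S(1) has_derivative_at_withinI[OF der] _ that]
    by (simp add: dist_norm)
  with L(1) show ?thesis by (intro that lipschitz_onI) auto
qed

lemma continuous_bounded_support_bounded:
  fixes f :: "'a::euclidean_space \<Rightarrow> real"
  assumes f: "continuous_on UNIV f" and supp: "bounded {x. f x \<noteq> 0}"
  obtains K where "\<And>x. \<bar>f x\<bar> \<le> K"
proof -
  obtain K where K: "0 \<le> K" "\<And>x. x \<in> closure {x. f x \<noteq> 0} \<Longrightarrow> norm (f x) \<le> K"
    using continuous_on_compact_bound[OF compact_closure[THEN iffD2, OF supp]
        continuous_on_subset[OF f subset_UNIV]] by blast
  have "\<bar>f x\<bar> \<le> K" for x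
    using K closure_subset[of "{x. f x \<noteq> 0}"] by (cases "f x = 0") auto
  then show ?thesis by (rule that)
qed

theorem mainTheorem14:
  fixes s p :: real and \<psi> :: "'a::euclidean_space \<Rightarrow> real"
  assumes s: "0 < s" "s < 1"
    and p: "1 < p"
    and psi_smooth: "smooth_fun \<psi>"
    and psi_supp: "closure {x. \<psi> x \<noteq> 0} \<subseteq> ball 0 (3/4)"
    and psi_one: "\<And>x. x \<in> ball 0 (5/8) \<Longrightarrow> \<psi> x = 1"
  shows "\<exists>c::real. c \<ge> 0 \<and>
    (\<forall>q::real. p - 1 < q \<and> q \<le> max ((p + 1) / 2) ((2 * p - 1) / 2) \<longrightarrow>
      (\<forall>u::'a \<Rightarrow> real. u \<in> borel_measurable lebesgue \<longrightarrow>
         set_integrable lebesgue (ball 0 1) u \<longrightarrow>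
         morrey_seminorm s p q 0 u 0 1 < top \<longrightarrow>
         bmo_seminorm UNIV (\<lambda>x. (u x - avg (ball 0 1) u) * \<psi> x)
           \<le> ennreal c * (bmo_seminorm (ball 0 1) u + morrey_seminorm s p q 0 u 0 1)))"
proof -
  have \<psi>_cont: "continuous_on UNIV \<psi>" by (rule smooth_fun_continuous[OF psi_smooth])
  have \<psi>_meas: "\<psi> \<in> borel_measurable lebesgue"
    using continuous_imp_measurable_on_sets_lebesgue[OF \<psi>_cont] by (simp add: lebesgue_on_UNIV_eq)
  have vanish: "\<And>x. x \<notin> ball 0 (3/4) \<Longrightarrow> \<psi> x = 0"
    using psi_supp closure_subset[of "{x. \<psi> x \<noteq> 0}"] by blast
  have "bounded {x. \<psi> x \<noteq> 0}"
    using vanish by (intro bounded_subset[OF bounded_ball, of _ 0 "3/4"]) blast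
  then obtain K where K: "\<And>x. \<bar>\<psi> x\<bar> \<le> K"
    using continuous_bounded_support_bounded[OF \<psi>_cont] by metis
  obtain L where L: "L-lipschitz_on (cball 0 1) \<psi>"
    using smooth_fun_lipschitz_on_convex_compact[OF psi_smooth convex_cball compact_cball] .
  define c where "c = 2 * 16 ^ DIM('a) * (K + L)"
  have "0 < c"
    using K[of 0] psi_one[of 0] lipschitz_on_nonneg[OF L] by (simp add: c_def)
  show ?thesis
  proof (intro exI[of _ c] conjI allI impI)
    fix q :: real and u :: "'a \<Rightarrow> real"
    assume u: "set_integrable lebesgue (ball 0 1) u"
    show "bmo_seminorm UNIV (\<lambda>x. (u x - avg (ball 0 1) u) * \<psi> x)
        \<le> ennreal c * (bmo_seminorm (ball 0 1) u + morrey_seminorm s p q 0 u 0 1)"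
    proof (cases "bmo_seminorm (ball 0 1) u")
      case (real m)
      have "bmo_seminorm UNIV (\<lambda>x. (u x - avg (ball 0 1) u) * \<psi> x) \<le> ennreal (c * m)"
        unfolding c_def
        by (rule bmo_seminorm_cutoff_le[OF u _ real(1) \<psi>_meas K
              lipschitz_on_subset[OF L ball_subset_cball] vanish]) (simp add: real(2))
      also have "\<dots> \<le> ennreal c * (bmo_seminorm (ball 0 1) u + morrey_seminorm s p q 0 u 0 1)"
        using real \<open>0 < c\<close> by (simp add: ennreal_mult mult_left_mono)
      finally show ?thesis .
    next
      case top
      then show ?thesis using \<open>0 < c\<close> by (simp add: ennreal_mult_top)
    qed
  qed (use \<open>0 < c\<close> in simp)
qed

end
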